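(* Let $p$ be an odd prime. Then $$\Psi^w_{\mathbb{Z}_p}(x)=\frac{2}{p-1}\sum_{d\mid\frac{p-1}{2}}\phi\!\left(\frac{p-1}{2d}\right)\left(\left(1+x^{\frac{p-1}{d}}\right)^{d}-1\right),$$ and hence $$\mathcal{E}^w(\mathbb{Z}_p)=\Psi^w_{\mathbb{Z}_p}(1)=\frac{2}{p-1}\sum_{d\mid\frac{p-1}{2}}\phi\!\left(\frac{p-1}{2d}\right)\left(2^d-1\right).$$
   Context: $\phi$ is Euler's totient function. For a finite group $\mathcal{A}$ with identity $e$, let $G(\mathcal{A})=\{\Omega\subseteq\mathcal{A}:\Omega^{-1}=\Omega,\ \langle\Omega\rangle=\mathcal{A},\ e\notin\Omega\}$. $\mathrm{Aut}(\mathcal{A})$ acts on $G(\mathcal{A})$ by $\alpha\cdot\Omega=\alpha(\Omega)$. For $k\ge1$ let $a^w_k(\mathcal{A})$ be the number of orbits of $\mathrm{Aut}(\mathcal{A})$ on $\{\Omega\in G(\mathcal{A}):|\Omega|=k\}$ (the number of weak equivalence classes of Cayley graphs $C(\mathcal{A},\Omega)$ of degree $k$); $\Psi^w_{\mathcal{A}}(x)=\sum_{k=1}^{|\mathcal{A}|-1}a^w_k(\mathcal{A})x^k$ and $\mathcal{E}^w(\mathcal{A})=\Psi^w_{\mathcal{A}}(1)$. *)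

theory Defs
  imports "HOL-Algebra.Algebra" "HOL-Number_Theory.Number_Theory"
begin

definition cayley_sets :: "('a, 'b) monoid_scheme \<Rightarrow> 'a set set" where
  "cayley_sets G = {S. S \<subseteq> carrier G \<and> (\<lambda>x. inv\<^bsub>G\<^esub> x) ` S = S \<and>
      generate G S = carrier G \<and> \<one>\<^bsub>G\<^esub> \<notin> S}"

definition aut_orbit :: "('a, 'b) monoid_scheme \<Rightarrow> 'a set \<Rightarrow> 'a set set" where
  "aut_orbit G S = {f ` S | f. f \<in> iso G G}"

definition weak_count :: "('a, 'b) monoid_scheme \<Rightarrow> nat \<Rightarrow> nat" where
  "weak_count G k = card (aut_orbit G ` {S \<in> cayley_sets G. card S = k})"

definition Psi_w :: "('a, 'b) monoid_scheme \<Rightarrow> real \<Rightarrow> real" where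
  "Psi_w G x = (\<Sum>k = 1..card (carrier G) - 1. real (weak_count G k) * x ^ k)"

definition E_w :: "('a, 'b) monoid_scheme \<Rightarrow> nat" where
  "E_w G = (\<Sum>k = 1..card (carrier G) - 1. weak_count G k)"

end

theory Submission
  imports Defs
begin

(* The Cayley sets of Z_p are the nonempty subsets of Z_p - {0} closed under negation, and
   Aut(Z_p) consists of the multiplications by units.  Taking discrete logarithms with
   respect to a primitive root g identifies the unit group with Z_(p-1): multiplication
   becomes rotation k |-> k + t (mod p - 1), and negation becomes rotation by (p-1)/2.
   Hence a^w_k(Z_p) counts the orbits of Z_n (n = p - 1) acting by rotation on the
   nonempty k-subsets of Z_n that are invariant under rotation by m = n/2. *)

definition rot :: "nat \<Rightarrow> nat \<Rightarrow> nat \<Rightarrow> nat" where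
  "rot n t k = (k + t) mod n"

lemma rot_image_rot_image: "rot n s ` rot n t ` T = rot n ((t + s) mod n) ` T"
  by (simp add: image_image rot_def mod_add_left_eq mod_add_right_eq add.assoc)

lemma rot_images_commute: "rot n s ` rot n t ` T = rot n t ` rot n s ` T"
  by (simp add: rot_image_rot_image add.commute)

lemma rot_inj: "inj_on (rot n t) {..<n}"
proof
  fix x y assume "x \<in> {..<n}" "y \<in> {..<n}" "rot n t x = rot n t y"
  then have "[x + t = y + t] (mod n)" "x < n" "y < n" by (auto simp: rot_def cong_def)
  then have "[x = y] (mod n)" using cong_add_rcancel_nat by blast
  then show "x = y" using \<open>x < n\<close> \<open>y < n\<close> by (simp add: cong_def)
qed

lemma rot_image_subset: "n > 0 \<Longrightarrow> rot n t ` T \<subseteq> {..<n}"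
  by (auto simp: rot_def)

lemma rot_zero_image: "T \<subseteq> {..<n} \<Longrightarrow> rot n 0 ` T = T"
  by (force simp: rot_def)

lemma card_rot_image: "T \<subseteq> {..<n} \<Longrightarrow> card (rot n t ` T) = card T"
  by (rule card_image) (meson inj_on_subset rot_inj)

lemma rot_image_eq_iff:
  "A \<subseteq> {..<n} \<Longrightarrow> B \<subseteq> {..<n} \<Longrightarrow> rot n t ` A = rot n t ` B \<longleftrightarrow> A = B"
  by (rule inj_on_image_eq_iff[OF rot_inj])

definition rot_fixed :: "nat \<Rightarrow> nat \<Rightarrow> nat set set" where
  "rot_fixed n t = {T. T \<subseteq> {..<n} \<and> rot n t ` T = T}"

definition rot_action :: "nat \<Rightarrow> nat set set \<Rightarrow> int \<Rightarrow> nat set \<Rightarrow> nat set" where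
  "rot_action n Z t = (\<lambda>T\<in>Z. rot n (nat t) ` T)"

definition rot_closed :: "nat \<Rightarrow> nat set set \<Rightarrow> bool" where
  "rot_closed n Z \<longleftrightarrow> Z \<subseteq> Pow {..<n} \<and> (\<forall>T\<in>Z. \<forall>t<n. rot n t ` T \<in> Z)"

lemma rot_action_Bij:
  assumes "rot_closed n Z" "t \<in> {0..<int n}"
  shows "rot_action n Z t \<in> Bij Z"
proof -
  have "inj_on (rot_action n Z t) Z"
    using assms(1) rot_image_eq_iff[of _ n _ "nat t"]
    by (auto simp: rot_closed_def rot_action_def inj_on_def)
  moreover have "rot_action n Z t ` Z = Z"
  proof
    show "rot_action n Z t ` Z \<subseteq> Z"
      using assms by (auto simp: rot_closed_def rot_action_def)
    show "Z \<subseteq> rot_action n Z t ` Z"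
    proof
      fix T assume T: "T \<in> Z"
      define u where "u = (n - nat t) mod n"
      have "nat t \<le> n" using assms(2) by (simp add: nat_le_iff)
      then have "(u + nat t) mod n = 0" by (simp add: u_def mod_add_left_eq)
      then have "rot n (nat t) ` rot n u ` T = T"
        using T assms(1) rot_zero_image[of T n] by (auto simp: rot_image_rot_image rot_closed_def)
      moreover have "rot n u ` T \<in> Z"
        using assms(1,2) T by (auto simp: rot_closed_def u_def)
      ultimately show "T \<in> rot_action n Z t ` Z"
        by (intro image_eqI[where x = "rot n u ` T"]) (simp_all add: rot_action_def)
    qed
  qed
  ultimately show ?thesis by (simp add: Bij_def bij_betw_def rot_action_def)
qed

lemma rot_group_action:
  assumes "n > 0" and "rot_closed n Z"
  shows "group_action (integer_mod_group n) Z (rot_action n Z)"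
proof -
  have carrier: "carrier (integer_mod_group n) = {0..<int n}"
    using assms(1) by (simp add: carrier_integer_mod_group)
  have hom: "rot_action n Z ((s + t) mod int n) = compose Z (rot_action n Z s) (rot_action n Z t)"
    if "s \<in> {0..<int n}" "t \<in> {0..<int n}" for s t
  proof -
    have "nat ((s + t) mod int n) = (nat t + nat s) mod n"
      using that by (simp add: nat_mod_distrib nat_add_distrib add.commute)
    moreover have "rot n (nat t) ` T \<in> Z" if "T \<in> Z" for T
      using assms(2) that \<open>t \<in> {0..<int n}\<close> by (simp add: rot_closed_def nat_less_iff)
    ultimately show ?thesis
      unfolding rot_action_def compose_def by (intro restrict_ext) (simp add: rot_image_rot_image)
  qed
  show ?thesis
    unfolding group_action_def group_hom_def group_hom_axioms_def hom_def
    using rot_action_Bij[OF assms(2)] hom group_BijGroup[of Z] by (simp add: carrier BijGroup_def)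
qed

definition rot_orbit :: "nat \<Rightarrow> nat set \<Rightarrow> nat set set" where
  "rot_orbit n T = {rot n t ` T | t. t < n}"

lemma rot_burnside:
  assumes "n > 0" and "rot_closed n Z"
  shows "card (rot_orbit n ` Z) * n = (\<Sum>t<n. card (Z \<inter> rot_fixed n t))"
proof -
  interpret group_action "integer_mod_group n" Z "rot_action n Z"
    using rot_group_action[OF assms] .
  have carrier: "carrier (integer_mod_group n) = int ` {..<n}"
    using assms(1) by (simp add: carrier_integer_mod_group lessThan_atLeast0 image_int_atLeastLessThan)
  have finite: "finite Z"
    using assms(2) by (auto simp: rot_closed_def intro: finite_subset)
  have "orbit (integer_mod_group n) (rot_action n Z) T = rot_orbit n T" if "T \<in> Z" for T
    using that by (auto simp: orbit_def rot_orbit_def rot_action_def carrier) (metis imageI lessThan_iff nat_int)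
  then have "orbits (integer_mod_group n) Z (rot_action n Z) = rot_orbit n ` Z"
    by (auto simp: orbits_def)
  moreover have "order (integer_mod_group n) = n"
    by (simp add: order_def carrier card_image)
  moreover have "(\<Sum>g\<in>carrier (integer_mod_group n). card (invariants Z (rot_action n Z) g))
      = (\<Sum>t<n. card (Z \<inter> rot_fixed n t))"
  proof -
    have "invariants Z (rot_action n Z) (int t) = Z \<inter> rot_fixed n t" for t
      using assms(2) by (auto simp: invariants_def rot_action_def rot_fixed_def rot_closed_def)
    then show ?thesis by (simp add: carrier sum.reindex)
  qed
  ultimately show ?thesis
    using burnside[OF _ finite] carrier by simp
qed

lemma rot_fixed_iff:
  "T \<in> rot_fixed n t \<longleftrightarrow> T \<subseteq> {..<n} \<and> (\<forall>k<n. k \<in> T \<longleftrightarrow> rot n t k \<in> T)"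
proof (cases "T \<subseteq> {..<n}")
  case True
  have "rot n t ` T = T \<longleftrightarrow> (\<forall>k<n. k \<in> T \<longleftrightarrow> rot n t k \<in> T)"
  proof
    assume fixed: "rot n t ` T = T"
    show "\<forall>k<n. k \<in> T \<longleftrightarrow> rot n t k \<in> T"
    proof (intro allI impI iffI)
      fix k assume "k \<in> T"
      then show "rot n t k \<in> T" using fixed by blast
    next
      fix k assume "k < n" "rot n t k \<in> T"
      then obtain k' where "k' \<in> T" "rot n t k' = rot n t k" using fixed by (metis imageE)
      moreover have "k' = k" using inj_onD[OF rot_inj] calculation True \<open>k < n\<close> by blast
      ultimately show "k \<in> T" by simp
    qed
  next
    assume "\<forall>k<n. k \<in> T \<longleftrightarrow> rot n t k \<in> T"
    then have "rot n t ` T \<subseteq> T" using True by auto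
    moreover have "finite T" using True finite_subset by blast
    ultimately show "rot n t ` T = T"
      using card_subset_eq card_rot_image[OF True] by blast
  qed
  then show ?thesis using True by (simp add: rot_fixed_def)
qed (simp add: rot_fixed_def)

lemma rot_fixed_iterate:
  assumes "T \<in> rot_fixed n t" "k < n"
  shows "k \<in> T \<longleftrightarrow> (k + j * t) mod n \<in> T"
proof (induction j)
  case 0
  then show ?case using assms(2) by simp
next
  case (Suc j)
  have "(k + Suc j * t) mod n = rot n t ((k + j * t) mod n)"
    by (simp add: rot_def mod_add_right_eq ac_simps)
  moreover have "(k + j * t) mod n < n" using assms(2) by simp
  ultimately show ?case
    using Suc assms(1) by (simp add: rot_fixed_iff)
qed

lemma rot_fixed_multiple:
  assumes "T \<in> rot_fixed n s" "s dvd t"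
  shows "T \<in> rot_fixed n t"
proof -
  obtain j where "t = j * s" using assms(2) by (metis dvdE mult.commute)
  then have "\<forall>k<n. k \<in> T \<longleftrightarrow> rot n t k \<in> T"
    using rot_fixed_iterate[OF assms(1)] by (simp add: rot_def)
  then show ?thesis using assms(1) by (simp add: rot_fixed_iff)
qed

(* By Bezout, the sets fixed by the rotations by t and by m are those fixed by gcd t m. *)
lemma rot_fixed_gcd: "rot_fixed n t \<inter> rot_fixed n m = rot_fixed n (gcd t m)"
proof (intro equalityI subsetI)
  fix T assume fixed: "T \<in> rot_fixed n t \<inter> rot_fixed n m"
  show "T \<in> rot_fixed n (gcd t m)"
  proof (cases "t = 0")
    case True
    then show ?thesis using fixed by simp
  next
    case False
    obtain a b where bezout: "t * a = m * b + gcd t m" using bezout_nat[OF False] by blast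
    have "k \<in> T \<longleftrightarrow> rot n (gcd t m) k \<in> T" if "k < n" for k
    proof -
      have "k \<in> T \<longleftrightarrow> (k + a * t) mod n \<in> T"
        using rot_fixed_iterate fixed that by blast
      also have "(k + a * t) mod n = ((k + gcd t m) mod n + b * m) mod n"
        using bezout by (simp add: mod_add_right_eq ac_simps)
      also have "\<dots> \<in> T \<longleftrightarrow> (k + gcd t m) mod n \<in> T"
        using rot_fixed_iterate[of T n m "(k + gcd t m) mod n"] fixed that by simp
      finally show ?thesis by (simp add: rot_def)
    qed
    then show ?thesis using fixed by (simp add: rot_fixed_iff)
  qed
next
  fix T assume "T \<in> rot_fixed n (gcd t m)"
  then show "T \<in> rot_fixed n t \<inter> rot_fixed n m"
    using rot_fixed_multiple by simp
qed

definition residue_union :: "nat \<Rightarrow> nat \<Rightarrow> nat set \<Rightarrow> nat set" where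
  "residue_union n d R = {k\<in>{..<n}. k mod d \<in> R}"

lemma rot_fixed_residue_union:
  assumes "d dvd n" "n > 0"
  shows "rot_fixed n d = residue_union n d ` Pow {..<d}"
proof (intro equalityI subsetI)
  fix T assume fixed: "T \<in> rot_fixed n d"
  have "d \<noteq> 0" using assms by auto
  then have "d > 0" by simp
  have "d \<le> n" using assms by (simp add: dvd_imp_le)
  have periodic: "k \<in> T \<longleftrightarrow> k mod d \<in> T" if "k < n" for k
  proof -
    have "k mod d < n" using \<open>d > 0\<close> \<open>d \<le> n\<close> by (meson mod_less_divisor order_less_le_trans)
    then have "k mod d \<in> T \<longleftrightarrow> (k mod d + (k div d) * d) mod n \<in> T"
      by (rule rot_fixed_iterate[OF fixed])
    then show ?thesis using that by simp
  qed
  have "T = residue_union n d (T \<inter> {..<d})"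
  proof (intro equalityI subsetI)
    fix k assume "k \<in> T"
    then have "k < n" using fixed by (auto simp: rot_fixed_def)
    then have "k mod d \<in> T" using periodic \<open>k \<in> T\<close> by blast
    then show "k \<in> residue_union n d (T \<inter> {..<d})"
      using \<open>k < n\<close> \<open>d > 0\<close> by (simp add: residue_union_def)
  next
    fix k assume "k \<in> residue_union n d (T \<inter> {..<d})"
    then have "k < n" "k mod d \<in> T" by (simp_all add: residue_union_def)
    then show "k \<in> T" using periodic by blast
  qed
  moreover have "T \<inter> {..<d} \<in> Pow {..<d}" by blast
  ultimately show "T \<in> residue_union n d ` Pow {..<d}" by (rule image_eqI)
next
  fix T assume "T \<in> residue_union n d ` Pow {..<d}"
  then obtain R where R: "T = residue_union n d R" by blast
  have "rot n d k mod d = k mod d" for k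
    using assms(1) by (simp add: rot_def mod_mod_cancel)
  then have "\<forall>k<n. k \<in> T \<longleftrightarrow> rot n d k \<in> T"
    using assms(2) R by (simp add: residue_union_def rot_def)
  then show "T \<in> rot_fixed n d"
    using R by (auto simp: rot_fixed_iff residue_union_def)
qed

(* Each residue class mod d contains n div d elements of Z_n. *)
lemma card_residue_union:
  assumes "d dvd n" "d > 0" "R \<subseteq> {..<d}"
  shows "card (residue_union n d R) = card R * (n div d)"
proof -
  have decomp: "bij_betw (\<lambda>(r, q). r + q * d) (R \<times> {..<n div d}) (residue_union n d R)"
  proof (rule bij_betw_byWitness[where f' = "\<lambda>k. (k mod d, k div d)"])
    have "r + q * d < n" if "r < d" "q < n div d" for r q
    proof -
      have "r + q * d < (q + 1) * d" using that by simp
      also have "\<dots> \<le> n div d * d" using that by (intro mult_le_mono1) simp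
      finally show ?thesis using assms(1) by simp
    qed
    then show "(\<lambda>(r, q). r + q * d) ` (R \<times> {..<n div d}) \<subseteq> residue_union n d R"
      using assms(3) by (auto simp: residue_union_def)
    show "(\<lambda>k. (k mod d, k div d)) ` residue_union n d R \<subseteq> R \<times> {..<n div d}"
      using assms(1,2) by (auto simp: residue_union_def div_less_iff_less_mult)
  qed (use assms(3) in \<open>auto simp: residue_union_def\<close>)
  then show ?thesis by (simp add: bij_betw_same_card[OF decomp, symmetric] card_cartesian_product)
qed

lemma sum_power_card_Pow:
  fixes y :: "'a::comm_semiring_1"
  assumes "finite A"
  shows "(\<Sum>R\<in>Pow A. y ^ card R) = (1 + y) ^ card A"
  using prod_add[OF assms, of "\<lambda>_. y" "\<lambda>_. 1"] by (simp add: add.commute)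

(* Generating function (by size) of the nonempty sets fixed by the rotations by m and t:
   such a set is a nonempty union of the gcd t m classes, each of size n div gcd t m. *)
lemma fixed_sets_generating_function:
  fixes x :: "'a::comm_ring_1"
  assumes "m dvd n" "n > 0"
  shows "(\<Sum>T \<in> rot_fixed n m \<inter> rot_fixed n t - {{}}. x ^ card T)
           = (1 + x ^ (n div gcd t m)) ^ gcd t m - 1"
proof -
  define d where "d = gcd t m"
  have "d dvd n" using assms(1) d_def by (metis dvd_trans gcd_dvd2)
  have "m \<noteq> 0" using assms by auto
  then have "d > 0" by (simp add: d_def)
  have "d \<le> n" using \<open>d dvd n\<close> assms(2) by (simp add: dvd_imp_le)
  have fixed_sets: "rot_fixed n m \<inter> rot_fixed n t = residue_union n d ` Pow {..<d}"
    using rot_fixed_gcd[of n t m] rot_fixed_residue_union[OF \<open>d dvd n\<close> assms(2)]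
    by (simp add: d_def Int_commute)
  have "inj_on (residue_union n d) (Pow {..<d})"
  proof (rule inj_onI)
    fix A B assume "A \<in> Pow {..<d}" "B \<in> Pow {..<d}" "residue_union n d A = residue_union n d B"
    moreover have "residue_union n d R \<inter> {..<d} = R" if "R \<subseteq> {..<d}" for R
      using that \<open>d \<le> n\<close> by (auto simp: residue_union_def)
    ultimately show "A = B" by (metis PowD)
  qed
  then have "(\<Sum>T\<in>residue_union n d ` Pow {..<d}. x ^ card T)
      = (\<Sum>R\<in>Pow {..<d}. (x ^ (n div d)) ^ card R)"
    using card_residue_union[OF \<open>d dvd n\<close> \<open>d > 0\<close>]
    by (simp add: sum.reindex power_mult[symmetric] mult.commute)
  also have "\<dots> = (1 + x ^ (n div d)) ^ d" by (simp add: sum_power_card_Pow)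
  finally show ?thesis
    unfolding fixed_sets d_def[symmetric]
    by (subst sum_diff1) (auto simp: residue_union_def intro!: image_eqI[where x = "{}"])
qed

(* Grouping 0 <= t < m by g = gcd t m: exactly totient (m div g) values give each g. *)
lemma sum_gcd_totient:
  fixes f :: "nat \<Rightarrow> 'a::comm_semiring_1"
  assumes "m > 0"
  shows "(\<Sum>t<m. f (gcd t m)) = (\<Sum>d | d dvd m. of_nat (totient (m div d)) * f d)"
proof -
  have "(\<Sum>t<m. f (gcd t m)) = (\<Sum>t\<in>{0<..m}. f (gcd t m))"
    by (rule sum.reindex_bij_witness[where i = "\<lambda>t. if t = m then 0 else t"
          and j = "\<lambda>t. if t = 0 then m else t"]) (use assms in auto)
  also have "\<dots> = (\<Sum>d | d dvd m. \<Sum>t\<in>{t\<in>{0<..m}. gcd t m = d}. f (gcd t m))"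
    by (rule sum.group[symmetric]) (use assms in auto)
  also have "\<dots> = (\<Sum>d | d dvd m. of_nat (totient (m div d)) * f d)"
  proof (rule sum.cong[OF refl])
    fix d assume "d \<in> {d. d dvd m}"
    then have "card {t\<in>{0<..m}. gcd t m = d} = totient (m div d)"
      using card_gcd_eq_totient[OF assms] by simp
    then show "(\<Sum>t\<in>{t\<in>{0<..m}. gcd t m = d}. f (gcd t m)) = of_nat (totient (m div d)) * f d"
      by simp
  qed
  finally show ?thesis .
qed

(* gcd t m is periodic in t with period m. *)
lemma sum_gcd_periodic:
  fixes f :: "nat \<Rightarrow> 'a::comm_semiring_1"
  shows "(\<Sum>t<c * m. f (gcd t m)) = of_nat c * (\<Sum>t<m. f (gcd t m))"
proof (induction c)
  case (Suc c)
  have "(\<Sum>t<Suc c * m. f (gcd t m)) = (\<Sum>t<c * m. f (gcd t m)) + (\<Sum>t\<in>{c * m..<c * m + m}. f (gcd t m))"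
    by (simp add: lessThan_atLeast0 sum.atLeastLessThan_concat add.commute)
  also have "(\<Sum>t\<in>{c * m..<c * m + m}. f (gcd t m)) = (\<Sum>t<m. f (gcd t m))"
    using sum.shift_bounds_nat_ivl[of "\<lambda>t. f (gcd t m)" 0 "c * m" m]
      gcd_add_mult[of m c] by (simp add: lessThan_atLeast0 add.commute gcd.commute)
  finally show ?case using Suc by (simp add: algebra_simps)
qed simp

lemma sum_gcd_divisor:
  fixes f :: "nat \<Rightarrow> 'a::comm_semiring_1"
  assumes "m dvd n" "m > 0"
  shows "(\<Sum>t<n. f (gcd t m)) = of_nat (n div m) * (\<Sum>d | d dvd m. of_nat (totient (m div d)) * f d)"
  using sum_gcd_periodic[where f = f and c = "n div m" and m = m] sum_gcd_totient[OF assms(2), of f]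
    assms(1) by simp

lemma sum_power_card_by_size:
  fixes x :: "'a::comm_semiring_1"
  assumes "finite F" "card ` F \<subseteq> {1..n}"
  shows "(\<Sum>k=1..n. of_nat (card {T\<in>F. card T = k}) * x ^ k) = (\<Sum>T\<in>F. x ^ card T)"
proof -
  have "(\<Sum>k=1..n. of_nat (card {T\<in>F. card T = k}) * x ^ k)
      = (\<Sum>k=1..n. \<Sum>T\<in>{T\<in>F. card T = k}. x ^ card T)"
    by (rule sum.cong[OF refl]) simp
  also have "\<dots> = (\<Sum>T\<in>F. x ^ card T)"
    by (rule sum.group[OF assms(1) _ assms(2)]) simp
  finally show ?thesis .
qed

lemma rot_closed_fixed_sets:
  assumes "n > 0"
  shows "rot_closed n {T \<in> rot_fixed n m - {{}}. card T = k}"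
  unfolding rot_closed_def
proof (intro conjI ballI allI impI)
  fix T t assume T: "T \<in> {T \<in> rot_fixed n m - {{}}. card T = k}"
  then have "T \<subseteq> {..<n}" "rot n m ` T = T" "T \<noteq> {}" "card T = k"
    by (auto simp: rot_fixed_def)
  moreover have "rot n m ` rot n t ` T = rot n t ` T"
    using rot_images_commute[of n m t T] \<open>rot n m ` T = T\<close> by simp
  ultimately show "rot n t ` T \<in> {T \<in> rot_fixed n m - {{}}. card T = k}"
    using rot_image_subset[OF assms] card_rot_image by (auto simp: rot_fixed_def)
qed (auto simp: rot_fixed_def)

lemma fixed_sets_by_size:
  fixes x :: real
  assumes "m dvd n" "n > 0"
  shows "(\<Sum>k=1..n. real (card ({T \<in> rot_fixed n m - {{}}. card T = k} \<inter> rot_fixed n t)) * x ^ k)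
       = (1 + x ^ (n div gcd t m)) ^ gcd t m - 1"
proof -
  let ?G = "rot_fixed n m \<inter> rot_fixed n t - {{}}"
  have "finite ?G"
    by (rule finite_subset[of _ "Pow {..<n}"]) (auto simp: rot_fixed_def)
  moreover have "card ` ?G \<subseteq> {1..n}"
  proof
    fix c assume "c \<in> card ` ?G"
    then obtain T where "T \<subseteq> {..<n}" "T \<noteq> {}" "c = card T" by (auto simp: rot_fixed_def)
    then show "c \<in> {1..n}"
      using card_mono[of "{..<n}" T] by (auto simp: Suc_le_eq card_gt_0_iff finite_subset)
  qed
  moreover have "{T \<in> rot_fixed n m - {{}}. card T = k} \<inter> rot_fixed n t = {T \<in> ?G. card T = k}" for k
    by auto
  ultimately show ?thesis
    using sum_power_card_by_size[of ?G n x] fixed_sets_generating_function[OF assms, of x t]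
    by simp
qed

theorem rot_orbit_polynomial:
  fixes x :: real
  assumes "m dvd n" "n > 0"
  shows "(\<Sum>k=1..n. real (card (rot_orbit n ` {T \<in> rot_fixed n m - {{}}. card T = k})) * x ^ k)
       = (\<Sum>d | d dvd m. real (totient (m div d)) * ((1 + x ^ (n div d)) ^ d - 1)) / real m"
proof -
  define F where "F k = {T \<in> rot_fixed n m - {{}}. card T = k}" for k
  define S where "S = (\<Sum>d | d dvd m. real (totient (m div d)) * ((1 + x ^ (n div d)) ^ d - 1))"
  have "m > 0" using assms by (auto intro: Nat.gr0I)
  have burnside: "real (card (rot_orbit n ` F k)) * real n = (\<Sum>t<n. real (card (F k \<inter> rot_fixed n t)))"
    for k
  proof -
    have "card (rot_orbit n ` F k) * n = (\<Sum>t<n. card (F k \<inter> rot_fixed n t))"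
      unfolding F_def by (rule rot_burnside[OF assms(2) rot_closed_fixed_sets[OF assms(2)]])
    then show ?thesis by (metis of_nat_mult of_nat_sum)
  qed
  have "(\<Sum>k=1..n. real (card (rot_orbit n ` F k)) * x ^ k) * real n
      = (\<Sum>k=1..n. (\<Sum>t<n. real (card (F k \<inter> rot_fixed n t))) * x ^ k)"
    by (simp add: sum_distrib_left sum_distrib_right burnside[symmetric] mult_ac)
  also have "\<dots> = (\<Sum>t<n. (1 + x ^ (n div gcd t m)) ^ gcd t m - 1)"
    unfolding sum_distrib_right F_def by (subst sum.swap) (simp only: fixed_sets_by_size[OF assms])
  also have "\<dots> = real (n div m) * S"
    unfolding S_def by (rule sum_gcd_divisor[OF assms(1) \<open>m > 0\<close>])
  also have "\<dots> = S / real m * real n"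
  proof -
    have "real n = real (n div m) * real m" using assms(1) by (metis dvd_div_mult_self of_nat_mult)
    then show ?thesis using \<open>m > 0\<close> by (simp add: field_simps)
  qed
  finally have "(\<Sum>k=1..n. real (card (rot_orbit n ` F k)) * x ^ k) = S / real m"
    by (rule mult_right_cancel[where c = "real n", THEN iffD1, rotated]) (use assms(2) in simp)
  then show ?thesis unfolding F_def S_def .
qed

lemma mult_mod_bij:
  assumes "Factorial_Ring.prime p" "a \<in> {1..<int p}"
  shows "bij_betw (\<lambda>x. a * x mod int p) {0..<int p} {0..<int p}"
proof -
  have "\<not> int p dvd a" using assms(2) by (auto dest: zdvd_imp_le)
  then have "coprime a (int p)"
    using prime_imp_coprime[of "int p" a] assms(1) by (simp add: coprime_commute)
  have "inj_on (\<lambda>x. a * x mod int p) {0..<int p}"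
  proof (rule inj_onI)
    fix x y assume "x \<in> {0..<int p}" "y \<in> {0..<int p}" "a * x mod int p = a * y mod int p"
    then have "[a * x = a * y] (mod int p)" "x \<in> {0..<int p}" "y \<in> {0..<int p}"
      by (simp_all add: cong_def)
    then show "x = y"
      using cong_mult_lcancel[OF \<open>coprime a (int p)\<close>] by (simp add: cong_def)
  qed
  moreover have "(\<lambda>x. a * x mod int p) ` {0..<int p} \<subseteq> {0..<int p}"
    using prime_gt_0_nat[OF assms(1)] by auto
  ultimately show ?thesis
    by (simp add: bij_betw_def endo_inj_surj)
qed

lemma mult_mod_iso:
  assumes "Factorial_Ring.prime p" "a \<in> {1..<int p}"
  shows "(\<lambda>x. a * x mod int p) \<in> iso (integer_mod_group p) (integer_mod_group p)"
proof -
  have carrier: "carrier (integer_mod_group p) = {0..<int p}"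
    using prime_gt_0_nat[OF assms(1)] by (simp add: carrier_integer_mod_group)
  have "a * ((x + y) mod int p) mod int p = (a * x mod int p + a * y mod int p) mod int p" for x y
    by (simp add: mod_mult_right_eq distrib_left mod_add_eq)
  then show ?thesis
    using mult_mod_bij[OF assms] by (auto simp: iso_def hom_def carrier bij_betw_def)
qed

(* Conversely every automorphism f of Z_p is multiplication by the unit f 1, since f is
   determined by its value on the generator 1. *)
lemma iso_is_mult_mod:
  assumes "p > 1" "f \<in> iso (integer_mod_group p) (integer_mod_group p)"
  shows "\<exists>a\<in>{1..<int p}. \<forall>x\<in>{0..<int p}. f x = a * x mod int p"
proof -
  interpret group_hom "integer_mod_group p" "integer_mod_group p" f
    using assms(2) by (simp add: group_hom_def group_hom_axioms_def iso_def)
  have carrier: "carrier (integer_mod_group p) = {0..<int p}"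
    using assms(1) by (simp add: carrier_integer_mod_group)
  have one: "(1::int) \<in> carrier (integer_mod_group p)" using assms(1) by simp
  have linear: "f x = f 1 * x mod int p" if "x \<in> {0..<int p}" for x
  proof -
    have "f (1 [^]\<^bsub>integer_mod_group p\<^esub> nat x) = f 1 [^]\<^bsub>integer_mod_group p\<^esub> nat x"
      by (rule hom_nat_pow[OF one])
    then show ?thesis using that by (simp add: mult.commute)
  qed
  have "inj_on f {0..<int p}" using assms(2) carrier by (simp add: iso_def bij_betw_def)
  moreover have "f 0 = 0" using hom_one by simp
  ultimately have "f 1 \<noteq> 0" using assms(1) by (metis atLeastLessThan_iff inj_onD one carrier zero_neq_one
        integer_mod_group_0)
  moreover have "f 1 \<in> {0..<int p}" using one carrier by auto
  ultimately have "f 1 \<in> {1..<int p}" by auto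
  then show ?thesis using linear by blast
qed

lemma aut_orbit_integer_mod_group:
  assumes "Factorial_Ring.prime p" "S \<subseteq> {0..<int p}"
  shows "aut_orbit (integer_mod_group p) S = {(\<lambda>x. a * x mod int p) ` S | a. a \<in> {1..<int p}}"
proof (intro equalityI subsetI)
  fix W assume "W \<in> aut_orbit (integer_mod_group p) S"
  then obtain f where f: "f \<in> iso (integer_mod_group p) (integer_mod_group p)" "W = f ` S"
    by (auto simp: aut_orbit_def)
  then obtain a where a: "a \<in> {1..<int p}" "\<forall>x\<in>{0..<int p}. f x = a * x mod int p"
    using iso_is_mult_mod prime_gt_1_nat[OF assms(1)] by blast
  have "W = (\<lambda>x. a * x mod int p) ` S" using f(2) a(2) assms(2) by (auto intro!: image_cong)
  then show "W \<in> {(\<lambda>x. a * x mod int p) ` S | a. a \<in> {1..<int p}}" using a(1) by blast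
next
  fix W assume "W \<in> {(\<lambda>x. a * x mod int p) ` S | a. a \<in> {1..<int p}}"
  then obtain a where "a \<in> {1..<int p}" "W = (\<lambda>x. a * x mod int p) ` S" by blast
  then show "W \<in> aut_orbit (integer_mod_group p) S"
    using mult_mod_iso[OF assms(1)] by (auto simp: aut_orbit_def)
qed

lemma generate_nonzero_integer_mod_group:
  assumes "Factorial_Ring.prime p" "a \<in> {1..<int p}"
  shows "generate (integer_mod_group p) {a} = carrier (integer_mod_group p)"
proof -
  interpret group "integer_mod_group p" by simp
  have carrier: "carrier (integer_mod_group p) = {0..<int p}"
    using prime_gt_0_nat[OF assms(1)] by (simp add: carrier_integer_mod_group)
  have a: "a \<in> carrier (integer_mod_group p)" using assms(2) carrier by auto
  have "y \<in> generate (integer_mod_group p) {a}" if "y \<in> {0..<int p}" for y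
  proof -
    have "y \<in> (\<lambda>x. a * x mod int p) ` {0..<int p}"
      using that mult_mod_bij[OF assms] by (simp add: bij_betw_def)
    then obtain x where "y = a * x mod int p" by blast
    then have "y = a [^]\<^bsub>integer_mod_group p\<^esub> x" by (simp add: int_pow_integer_mod_group mult.commute)
    then show ?thesis unfolding generate_pow[OF a] by blast
  qed
  then have "carrier (integer_mod_group p) \<subseteq> generate (integer_mod_group p) {a}"
    unfolding carrier by blast
  moreover have "generate (integer_mod_group p) {a} \<subseteq> carrier (integer_mod_group p)"
    using a by (intro generate_incl) simp
  ultimately show ?thesis by (rule equalityI[rotated])
qed

lemma cayley_sets_integer_mod_group:
  assumes "Factorial_Ring.prime p"
  shows "S \<in> cayley_sets (integer_mod_group p) \<longleftrightarrow>
           S \<subseteq> {1..<int p} \<and> S \<noteq> {} \<and> (\<lambda>x. (- x) mod int p) ` S = S"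
proof -
  interpret group "integer_mod_group p" by simp
  have carrier: "carrier (integer_mod_group p) = {0..<int p}"
    using prime_gt_0_nat[OF assms] by (simp add: carrier_integer_mod_group)
  have inverses: "(\<lambda>x. inv\<^bsub>integer_mod_group p\<^esub> x) ` S = (\<lambda>x. (- x) mod int p) ` S"
    if "S \<subseteq> carrier (integer_mod_group p)"
    using that by (intro image_cong) auto
  have one: "(1::int) \<in> carrier (integer_mod_group p)"
    using prime_gt_1_nat[OF assms] by simp
  show ?thesis
  proof
    assume "S \<in> cayley_sets (integer_mod_group p)"
    then have S: "S \<subseteq> {0..<int p}" "(\<lambda>x. inv\<^bsub>integer_mod_group p\<^esub> x) ` S = S"
        "generate (integer_mod_group p) S = {0..<int p}" "0 \<notin> S"
      by (simp_all add: cayley_sets_def carrier)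
    have "S \<subseteq> {1..<int p}"
    proof
      fix x assume "x \<in> S"
      then show "x \<in> {1..<int p}" using S(1,4) by (cases "x = 0") auto
    qed
    moreover have "S \<noteq> {}"
    proof
      assume "S = {}"
      then have "{0..<int p} = {0}" using S(3) generate_empty by simp
      then show False using one carrier by (metis singletonD zero_neq_one)
    qed
    ultimately show "S \<subseteq> {1..<int p} \<and> S \<noteq> {} \<and> (\<lambda>x. (- x) mod int p) ` S = S"
      using S(2) inverses S(1) carrier by simp
  next
    assume S: "S \<subseteq> {1..<int p} \<and> S \<noteq> {} \<and> (\<lambda>x. (- x) mod int p) ` S = S"
    then obtain a where "a \<in> S" by blast
    then have "generate (integer_mod_group p) {a} \<subseteq> generate (integer_mod_group p) S"
      by (intro mono_generate) simp
    moreover have "a \<in> {1..<int p}" using \<open>a \<in> S\<close> S by blast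
    ultimately have "carrier (integer_mod_group p) \<subseteq> generate (integer_mod_group p) S"
      using generate_nonzero_integer_mod_group[OF assms] by simp
    moreover have S_carrier: "S \<subseteq> carrier (integer_mod_group p)" using S carrier by auto
    moreover have "generate (integer_mod_group p) S \<subseteq> carrier (integer_mod_group p)"
      using S_carrier by (rule generate_incl)
    moreover have "0 \<notin> S" using S by auto
    ultimately show "S \<in> cayley_sets (integer_mod_group p)"
      using S inverses[OF S_carrier] by (simp add: cayley_sets_def)
  qed
qed

locale prime_primroot =
  fixes p g :: nat
  assumes prime: "Factorial_Ring.prime p" and odd: "odd p" and primroot: "residue_primroot p g"
begin

definition dexp :: "nat \<Rightarrow> int" where
  "dexp k = int g ^ k mod int p"

lemma p_ge_3: "p \<ge> 3"
  using prime_ge_2_nat[OF prime] odd by (cases "p = 2") auto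

lemma half_pos: "(p - 1) div 2 > 0"
  using p_ge_3 by simp

lemma half_dvd: "(p - 1) div 2 dvd p - 1"
  using odd by (auto elim!: oddE)

lemma fermat_g: "int g ^ (p - 1) mod int p = 1"
proof -
  have "coprime p g" using primroot by (simp add: residue_primroot_def)
  have "\<not> p dvd g"
  proof
    assume "p dvd g"
    then have "p dvd 1" using \<open>coprime p g\<close> by (meson coprime_common_divisor dvd_refl)
    then show False using p_ge_3 by simp
  qed
  then have "[g ^ (p - 1) = 1] (mod p)" by (rule fermat_theorem[OF prime])
  then have "[int g ^ (p - 1) = 1] (mod int p)" by (metis cong_int_iff of_nat_1 of_nat_power)
  then show ?thesis using p_ge_3 by (simp add: cong_def)
qed

(* Exponents of g can be reduced modulo p - 1 (Fermat). *)
lemma power_g_mod: "int g ^ j mod int p = dexp (j mod (p - 1))"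
proof -
  have "int g ^ j = int g ^ (j mod (p - 1)) * (int g ^ (p - 1)) ^ (j div (p - 1))"
    by (metis power_add power_mult mod_div_mult_eq mult.commute)
  also have "\<dots> mod int p = int g ^ (j mod (p - 1)) * ((int g ^ (p - 1) mod int p) ^ (j div (p - 1)) mod int p) mod int p"
    by (simp add: mod_mult_right_eq power_mod)
  finally show ?thesis using fermat_g p_ge_3 by (simp add: dexp_def)
qed

(* g^((p-1)/2) squares to 1 but is not 1, as g has order p - 1; so it is -1. *)
lemma power_g_half: "int g ^ ((p - 1) div 2) mod int p = int p - 1"
proof -
  define h where "h = (p - 1) div 2"
  have "ord p g = p - 1"
    using primroot prime by (simp add: residue_primroot_def totient_prime)
  then have not_one: "\<not> [g ^ h = 1] (mod p)"
    using ord_divides[of g h p] half_pos p_ge_3 by (auto simp: h_def dest: dvd_imp_le)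
  have "p - 1 = h + h" using odd by (auto simp: h_def elim!: oddE)
  then have "int g ^ (p - 1) - 1 = (int g ^ h - 1) * (int g ^ h + 1)"
    by (simp add: power_add algebra_simps)
  moreover have "int p dvd int g ^ (p - 1) - 1"
    using fermat_g mod_eq_dvd_iff[of "int g ^ (p - 1)" "int p" 1] p_ge_3 by simp
  ultimately have "int p dvd int g ^ h - 1 \<or> int p dvd int g ^ h + 1"
    using prime by (simp add: prime_dvd_mult_iff)
  moreover have "\<not> int p dvd int g ^ h - 1"
    using not_one by (metis cong_iff_dvd_diff cong_int_iff of_nat_1 of_nat_power)
  ultimately have "[int g ^ h = - 1] (mod int p)" by (simp add: cong_iff_dvd_diff)
  then show ?thesis using p_ge_3 by (simp add: h_def cong_def zmod_minus1)
qed

lemma dexp_rot: "dexp (rot (p - 1) t k) = dexp t * dexp k mod int p"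
proof -
  have "dexp (rot (p - 1) t k) = int g ^ (k + t) mod int p"
    by (simp add: rot_def power_g_mod)
  also have "\<dots> = dexp t * dexp k mod int p"
    by (simp add: dexp_def power_add mod_mult_eq mult.commute)
  finally show ?thesis .
qed

lemma dexp_rot_half: "dexp (rot (p - 1) ((p - 1) div 2) k) = (- dexp k) mod int p"
proof -
  have "dexp (rot (p - 1) ((p - 1) div 2) k) = int g ^ (k + (p - 1) div 2) mod int p"
    unfolding rot_def by (rule power_g_mod[symmetric])
  also have "\<dots> = int g ^ k * (int g ^ ((p - 1) div 2) mod int p) mod int p"
    by (simp add: power_add mod_mult_right_eq)
  also have "\<dots> = int g ^ k * (int p - 1) mod int p"
    by (simp only: power_g_half)
  also have "\<dots> = (- (int g ^ k)) mod int p"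
    by (simp add: mod_eq_dvd_iff algebra_simps)
  also have "\<dots> = (- dexp k) mod int p"
    by (simp add: dexp_def mod_minus_eq)
  finally show ?thesis .
qed

lemma dexp_bij: "bij_betw dexp {..<p - 1} {1..<int p}"
proof -
  have "bij_betw (\<lambda>i. g ^ i mod p) {..<p - 1} {0<..<p}"
    using residue_primroot_is_generator[OF _ primroot] prime p_ge_3
    by (simp add: totient_prime totatives_prime)
  moreover have "bij_betw int {0<..<p} {1..<int p}"
  proof -
    have "{0<..<p} = {1..<p}" by auto
    then show ?thesis by (simp add: bij_betw_def image_int_atLeastLessThan)
  qed
  ultimately have "bij_betw (int \<circ> (\<lambda>i. g ^ i mod p)) {..<p - 1} {1..<int p}"
    by (rule bij_betw_trans)
  moreover have "int \<circ> (\<lambda>i. g ^ i mod p) = dexp"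
    by (rule ext) (simp add: dexp_def of_nat_mod)
  ultimately show ?thesis by simp
qed

lemma dexp_inj_image: "inj_on (image dexp) (Pow {..<p - 1})"
  using inj_on_image[of dexp "Pow {..<p - 1}"] dexp_bij by (simp add: bij_betw_def)

lemma dexp_image_rot: "(\<lambda>x. dexp t * x mod int p) ` dexp ` T = dexp ` rot (p - 1) t ` T"
  unfolding image_image by (rule image_cong[OF refl]) (rule dexp_rot[symmetric])

lemma dexp_image_neg: "(\<lambda>x. (- x) mod int p) ` dexp ` T = dexp ` rot (p - 1) ((p - 1) div 2) ` T"
  unfolding image_image by (rule image_cong[OF refl]) (rule dexp_rot_half[symmetric])

lemma cayley_sets_dexp:
  "{S \<in> cayley_sets (integer_mod_group p). card S = k}
     = image dexp ` {T \<in> rot_fixed (p - 1) ((p - 1) div 2) - {{}}. card T = k}"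
proof (intro equalityI subsetI)
  fix S assume "S \<in> {S \<in> cayley_sets (integer_mod_group p). card S = k}"
  then have S: "S \<subseteq> {1..<int p}" "S \<noteq> {}" "(\<lambda>x. (- x) mod int p) ` S = S" "card S = k"
    using cayley_sets_integer_mod_group[OF prime] by auto
  define T where "T = {j \<in> {..<p - 1}. dexp j \<in> S}"
  have T: "T \<subseteq> {..<p - 1}" by (auto simp: T_def)
  have "S = dexp ` T"
    using S(1) dexp_bij by (auto simp: T_def bij_betw_def)
  moreover have "rot (p - 1) ((p - 1) div 2) ` T = T"
  proof -
    have "rot (p - 1) ((p - 1) div 2) ` T \<subseteq> {..<p - 1}" using rot_image_subset p_ge_3 by simp
    moreover have "dexp ` rot (p - 1) ((p - 1) div 2) ` T = dexp ` T"
      using S(3) \<open>S = dexp ` T\<close> dexp_image_neg by simp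
    ultimately show ?thesis using inj_onD[OF dexp_inj_image] T by blast
  qed
  moreover have "card T = k"
    using S(4) \<open>S = dexp ` T\<close> card_image inj_on_subset[OF _ T] dexp_bij by (metis bij_betw_def)
  ultimately show "S \<in> image dexp ` {T \<in> rot_fixed (p - 1) ((p - 1) div 2) - {{}}. card T = k}"
    using S(2) T by (auto simp: rot_fixed_def)
next
  fix S assume "S \<in> image dexp ` {T \<in> rot_fixed (p - 1) ((p - 1) div 2) - {{}}. card T = k}"
  then obtain T where T: "T \<subseteq> {..<p - 1}" "T \<noteq> {}" "rot (p - 1) ((p - 1) div 2) ` T = T"
      "card T = k" "S = dexp ` T"
    by (auto simp: rot_fixed_def)
  have "S \<subseteq> {1..<int p}" using T(1,5) dexp_bij by (auto simp: bij_betw_def)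
  moreover have "(\<lambda>x. (- x) mod int p) ` S = S" using T(3,5) dexp_image_neg by simp
  moreover have "card S = k"
    using T(1,4,5) card_image inj_on_subset dexp_bij by (metis bij_betw_def)
  ultimately show "S \<in> {S \<in> cayley_sets (integer_mod_group p). card S = k}"
    using T(2,5) cayley_sets_integer_mod_group[OF prime] by simp
qed

lemma aut_orbit_dexp:
  assumes "T \<subseteq> {..<p - 1}"
  shows "aut_orbit (integer_mod_group p) (dexp ` T) = image dexp ` rot_orbit (p - 1) T"
proof -
  have "dexp ` T \<subseteq> dexp ` {..<p - 1}" using assms by (rule image_mono)
  then have "dexp ` T \<subseteq> {0..<int p}"
    using dexp_bij by (auto simp: bij_betw_def)
  then have "aut_orbit (integer_mod_group p) (dexp ` T)
      = {(\<lambda>x. a * x mod int p) ` dexp ` T | a. a \<in> {1..<int p}}"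
    by (rule aut_orbit_integer_mod_group[OF prime])
  also have "\<dots> = (\<lambda>a. (\<lambda>x. a * x mod int p) ` dexp ` T) ` dexp ` {..<p - 1}"
    unfolding Setcompr_eq_image using dexp_bij by (simp add: bij_betw_def)
  also have "\<dots> = (\<lambda>t. dexp ` rot (p - 1) t ` T) ` {..<p - 1}"
    by (subst image_image) (simp only: dexp_image_rot)
  also have "\<dots> = image dexp ` rot_orbit (p - 1) T"
    by (auto simp: rot_orbit_def)
  finally show ?thesis .
qed

lemma weak_count_rot_orbits:
  "weak_count (integer_mod_group p) k
     = card (rot_orbit (p - 1) ` {T \<in> rot_fixed (p - 1) ((p - 1) div 2) - {{}}. card T = k})"
proof -
  let ?F = "{T \<in> rot_fixed (p - 1) ((p - 1) div 2) - {{}}. card T = k}"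
  have F: "T \<subseteq> {..<p - 1}" if "T \<in> ?F" for T using that by (auto simp: rot_fixed_def)
  have "aut_orbit (integer_mod_group p) ` {S \<in> cayley_sets (integer_mod_group p). card S = k}
      = image (image dexp) ` rot_orbit (p - 1) ` ?F"
    unfolding cayley_sets_dexp image_image using aut_orbit_dexp[OF F] by simp
  moreover have "inj_on (image (image dexp)) (rot_orbit (p - 1) ` ?F)"
  proof (rule inj_on_image, rule inj_on_subset[OF dexp_inj_image])
    show "\<Union> (rot_orbit (p - 1) ` ?F) \<subseteq> Pow {..<p - 1}"
      using p_ge_3 by (auto simp: rot_orbit_def rot_def)
  qed
  ultimately show ?thesis by (simp add: weak_count_def card_image)
qed

end

theorem corollary5p1:
  fixes p :: nat
  assumes "Factorial_Ring.prime p" and "odd p"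
  shows "(\<forall>x::real. Psi_w (integer_mod_group p) x =
            2 / (real p - 1) * (\<Sum>d | d dvd (p - 1) div 2.
               real (totient ((p - 1) div (2 * d))) * ((1 + x ^ ((p - 1) div d)) ^ d - 1)))
         \<and> real (E_w (integer_mod_group p)) = Psi_w (integer_mod_group p) 1
         \<and> real (E_w (integer_mod_group p)) =
            2 / (real p - 1) * (\<Sum>d | d dvd (p - 1) div 2.
               real (totient ((p - 1) div (2 * d))) * (2 ^ d - 1))"
proof -
  obtain g where "residue_primroot p g"
    using prime_primitive_root_exists[OF prime_gt_1_nat[OF assms(1)] assms(1)] by blast
  then interpret prime_primroot p g
    using assms by unfold_locales
  have card_carrier: "card (carrier (integer_mod_group p)) = p"
    using p_ge_3 by (simp add: carrier_integer_mod_group)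
  have half: "real ((p - 1) div 2) = (real p - 1) / 2"
    using assms(2) by (auto elim!: oddE)
  have Psi: "Psi_w (integer_mod_group p) x =
      2 / (real p - 1) * (\<Sum>d | d dvd (p - 1) div 2.
        real (totient ((p - 1) div (2 * d))) * ((1 + x ^ ((p - 1) div d)) ^ d - 1))" for x :: real
  proof -
    have "Psi_w (integer_mod_group p) x = (\<Sum>k = 1..p - 1. real (card (rot_orbit (p - 1) `
        {T \<in> rot_fixed (p - 1) ((p - 1) div 2) - {{}}. card T = k})) * x ^ k)"
      by (simp add: Psi_w_def card_carrier weak_count_rot_orbits)
    also have "\<dots> = (\<Sum>d | d dvd (p - 1) div 2. real (totient ((p - 1) div 2 div d))
        * ((1 + x ^ ((p - 1) div d)) ^ d - 1)) / real ((p - 1) div 2)"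
      using rot_orbit_polynomial[OF half_dvd] p_ge_3 by simp
    finally show ?thesis unfolding half div_mult2_eq by simp
  qed
  moreover have "real (E_w (integer_mod_group p)) = Psi_w (integer_mod_group p) 1"
    by (simp add: E_w_def Psi_w_def)
  ultimately show ?thesis by (simp add: numeral_2_eq_2)
qed

end
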